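(* For every integer $n\ge1$ and every $u\in V$, $\Pr(E_{4u})<\dfrac{3}{\ln(n+1)}$.
   Context: For an integer $n\ge1$, the $n$-octahedral graph $G'_n=(V,E')$ is the undirected graph with vertex set $V=\{u\in\mathbb{Z}^3:|u_1|+|u_2|+|u_3|=n\}$ and edge set $E'=\{\{v,w\}\subset V: v\neq w,\ |v_i-w_i|\le 1 \text{ for all } i=1,2,3\}$. For $u,v\in V$, $d_{uv}$ denotes the shortest-path distance in $G'_n$, and $Z_u=\left(\sum_{w\in V\setminus\{u\}} d_{uw}^{-2}\right)^{-1}$. The OSW random graph $G_n=(V,E)$ is the directed graph in which, for every $\{u,v\}\in E'$, both $(u,v),(v,u)\in E$, and in addition each vertex $u\in V$, independently of the others, chooses one vertex $v\in V\setminus\{u\}$ with probability $Z_u d_{uv}^{-2}$ and the long-range edge $(u,v)$ is added; $C_{uv}$ denotes the event that $u$ chooses $v$. For an ordered pair $(x,y)$ of distinct vertices, say $(x,y)$ is of type $s$ if $\{x,y\}\in E'$, and of type $w$ if $d_{xy}\ge2$ and $C_{xy}$ occurs. A C3 rooted at $u$ of type $(t_1,t_2,t_3)\in\{s,w\}^3$ is a triple $(u,a,b)$ of pairwise distinct vertices such that $(u,a)$ is of type $t_1$, $(a,b)$ is of type $t_2$ and $(b,u)$ is of type $t_3$. $E_{4u}$ is the event that there exists a C3 rooted at $u$ of type $(w,s,s)$. *)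

theory Defs
  imports "HOL-Probability.Probability"
begin

type_synonym pt = "int \<times> int \<times> int"

definition octV :: "nat \<Rightarrow> pt set" where
  "octV n = {(x1, x2, x3). \<bar>x1\<bar> + \<bar>x2\<bar> + \<bar>x3\<bar> = int n}"

definition octAdj :: "nat \<Rightarrow> pt \<Rightarrow> pt \<Rightarrow> bool" where
  "octAdj n v w \<longleftrightarrow> v \<in> octV n \<and> w \<in> octV n \<and> v \<noteq> w \<and>
     \<bar>fst v - fst w\<bar> \<le> 1 \<and> \<bar>fst (snd v) - fst (snd w)\<bar> \<le> 1 \<and>
     \<bar>snd (snd v) - snd (snd w)\<bar> \<le> 1"

definition octE :: "nat \<Rightarrow> pt rel" where
  "octE n = {(v, w). octAdj n v w}"

definition octDist :: "nat \<Rightarrow> pt \<Rightarrow> pt \<Rightarrow> nat" where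
  "octDist n u v = (LEAST k. (u, v) \<in> octE n ^^ k)"

definition octZ :: "nat \<Rightarrow> pt \<Rightarrow> real" where
  "octZ n u = inverse (\<Sum>w \<in> octV n - {u}. 1 / (real (octDist n u w))\<^sup>2)"

definition choice_pmf :: "nat \<Rightarrow> pt \<Rightarrow> pt pmf" where
  "choice_pmf n u = embed_pmf (\<lambda>v. if v \<in> octV n - {u}
       then octZ n u / (real (octDist n u v))\<^sup>2 else 0)"

text \<open>Joint law of all choices (independent over vertices); an outcome c
  is the choice function, C_uv is the event c u = v.\<close>
definition OSW_pmf :: "nat \<Rightarrow> (pt \<Rightarrow> pt) pmf" where
  "OSW_pmf n = Pi_pmf (octV n) (0, 0, 0) (choice_pmf n)"

definition type_s :: "nat \<Rightarrow> pt \<Rightarrow> pt \<Rightarrow> bool" where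
  "type_s n x y \<longleftrightarrow> octAdj n x y"

definition type_w :: "nat \<Rightarrow> (pt \<Rightarrow> pt) \<Rightarrow> pt \<Rightarrow> pt \<Rightarrow> bool" where
  "type_w n c x y \<longleftrightarrow> x \<in> octV n \<and> y \<in> octV n \<and> x \<noteq> y \<and>
      octDist n x y \<ge> 2 \<and> c x = y"

definition E4 :: "nat \<Rightarrow> pt \<Rightarrow> (pt \<Rightarrow> pt) set" where
  "E4 n u = {c. \<exists>a b. u \<noteq> a \<and> a \<noteq> b \<and> b \<noteq> u \<and>
      type_w n c u a \<and> type_s n a b \<and> type_s n b u}"

end

theory Submission
  imports Defs "HOL-Analysis.Harmonic_Numbers"
begin

text \<open>If \<open>E\<^sub>4\<^sub>u\<close> occurs, the long-range contact of \<open>u\<close> is a vertex at graph distance exactly 2,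
  i.e. within Chebyshev distance 2 of \<open>u\<close>. There are at most 24 of these, each chosen with
  probability at most \<open>Z\<^sub>u / 4\<close>, so \<open>Pr(E\<^sub>4\<^sub>u) \<le> 6 Z\<^sub>u\<close>. Conversely, up to a symmetry
  \<open>u\<close> has third coordinate \<open>t \<ge> n/3\<close>, and near \<open>u\<close> the octahedron is the graph of
  \<open>(x\<^sub>1, x\<^sub>2) \<mapsto> n - \<bar>x\<^sub>1\<bar> - \<bar>x\<^sub>2\<bar>\<close>. Lifting the \<open>4k\<close> lattice points at \<open>\<ell>\<^sub>1\<close>-distance
  \<open>k \<le> t\<close> gives \<open>4k\<close> vertices at graph distance at most \<open>k\<close>, hence
  \<open>1/Z\<^sub>u \<ge> 4 H\<^sub>t > 2 ln (n + 1)\<close>. For \<open>n < 7\<close> the bound exceeds 1.\<close>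

definition l1_norm :: "pt \<Rightarrow> int" where
  "l1_norm x = \<bar>fst x\<bar> + \<bar>fst (snd x)\<bar> + \<bar>snd (snd x)\<bar>"

definition cheb_dist :: "pt \<Rightarrow> pt \<Rightarrow> int" where
  "cheb_dist x y = max \<bar>fst x - fst y\<bar>
     (max \<bar>fst (snd x) - fst (snd y)\<bar> \<bar>snd (snd x) - snd (snd y)\<bar>)"

lemma octV_iff_l1_norm: "x \<in> octV n \<longleftrightarrow> l1_norm x = int n"
  by (cases x) (auto simp: octV_def l1_norm_def)

lemma octAdj_iff_cheb_dist:
  "octAdj n v w \<longleftrightarrow> v \<in> octV n \<and> w \<in> octV n \<and> v \<noteq> w \<and> cheb_dist v w \<le> 1"
  by (auto simp: octAdj_def cheb_dist_def)

lemma finite_octV: "finite (octV n)"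
proof (rule finite_subset)
  show "octV n \<subseteq> {-int n..int n} \<times> {-int n..int n} \<times> {-int n..int n}"
    by (auto simp: octV_def)
qed auto

lemma cheb_dist_triangle: "cheb_dist x z \<le> cheb_dist x y + cheb_dist y z"
proof -
  have "\<bar>fst x - fst z\<bar> \<le> \<bar>fst x - fst y\<bar> + \<bar>fst y - fst z\<bar>"
    and "\<bar>fst (snd x) - fst (snd z)\<bar> \<le> \<bar>fst (snd x) - fst (snd y)\<bar> + \<bar>fst (snd y) - fst (snd z)\<bar>"
    and "\<bar>snd (snd x) - snd (snd z)\<bar> \<le> \<bar>snd (snd x) - snd (snd y)\<bar> + \<bar>snd (snd y) - snd (snd z)\<bar>"
    by arith+
  then show ?thesis
    unfolding cheb_dist_def by (smt (verit) max.cobounded1 max.cobounded2 max.bounded_iff)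
qed

lemma octDist_le: "(u, w) \<in> octE n ^^ k \<Longrightarrow> octDist n u w \<le> k"
  unfolding octDist_def by (rule Least_le)

lemma octDist_pos:
  assumes "(u, w) \<in> octE n ^^ k" and "u \<noteq> w"
  shows "0 < octDist n u w"
proof -
  have "(u, w) \<in> octE n ^^ octDist n u w"
    unfolding octDist_def by (rule LeastI[of _ k]) (rule assms(1))
  then show ?thesis using assms(2) by (cases "octDist n u w") auto
qed

definition inv_sq_dist_sum :: "nat \<Rightarrow> pt \<Rightarrow> real" where
  "inv_sq_dist_sum n u = (\<Sum>w \<in> octV n - {u}. 1 / (real (octDist n u w))\<^sup>2)"

lemma octZ_eq: "octZ n u = inverse (inv_sq_dist_sum n u)"
  by (simp add: octZ_def inv_sq_dist_sum_def)

lemma pmf_choice_pmf: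
  assumes "0 < inv_sq_dist_sum n u"
  shows "pmf (choice_pmf n u) v =
     (if v \<in> octV n - {u} then octZ n u / (real (octDist n u v))\<^sup>2 else 0)"
proof -
  define f where "f v = (if v \<in> octV n - {u} then octZ n u / (real (octDist n u v))\<^sup>2 else 0)"
    for v
  have f_nonneg: "0 \<le> f v" for v
    using assms by (simp add: f_def octZ_eq)
  have "(\<Sum>v \<in> octV n - {u}. f v) = octZ n u * inv_sq_dist_sum n u"
    by (simp add: f_def inv_sq_dist_sum_def sum_distrib_left)
  also have "\<dots> = 1"
    using assms by (simp add: octZ_eq)
  finally have sum_f: "(\<Sum>v \<in> octV n - {u}. f v) = 1" .
  have "(\<integral>\<^sup>+v. ennreal (f v) \<partial>count_space UNIV) = (\<Sum>v \<in> octV n - {u}. ennreal (f v))"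
    by (rule nn_integral_count_space') (auto simp: f_def finite_octV)
  also have "\<dots> = 1"
    using f_nonneg sum_f by simp
  finally have "(\<integral>\<^sup>+v. ennreal (f v) \<partial>count_space UNIV) = 1" .
  then show ?thesis
    unfolding choice_pmf_def f_def[symmetric] using f_nonneg
    by (simp add: pmf_embed_pmf f_def)
qed

lemma map_pmf_OSW_pmf_component:
  "u \<in> octV n \<Longrightarrow> map_pmf (\<lambda>c. c u) (OSW_pmf n) = choice_pmf n u"
  by (simp add: OSW_pmf_def Pi_pmf_component finite_octV)

definition E4_targets :: "nat \<Rightarrow> pt \<Rightarrow> pt set" where
  "E4_targets n u =
     {a \<in> octV n. a \<noteq> u \<and> 2 \<le> octDist n u a \<and> (\<exists>b. octAdj n a b \<and> octAdj n b u)}"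

lemma E4_subset_E4_targets: "E4 n u \<subseteq> (\<lambda>c. c u) -` E4_targets n u"
proof
  fix c assume "c \<in> E4 n u"
  then obtain a b where "type_w n c u a" "type_s n a b" "type_s n b u"
    unfolding E4_def by blast
  then have "c u \<in> octV n" "c u \<noteq> u" "2 \<le> octDist n u (c u)"
    and "octAdj n (c u) b" "octAdj n b u"
    unfolding type_w_def type_s_def by auto
  then show "c \<in> (\<lambda>c. c u) -` E4_targets n u"
    unfolding E4_targets_def by blast
qed

lemma prob_E4_le:
  assumes "u \<in> octV n" and S_pos: "0 < inv_sq_dist_sum n u"
  shows "measure_pmf.prob (OSW_pmf n) (E4 n u)
           \<le> card (E4_targets n u) / (4 * inv_sq_dist_sum n u)"
proof -
  let ?S = "inv_sq_dist_sum n u" and ?A = "E4_targets n u"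
  have finite_A: "finite ?A"
    by (rule finite_subset[OF _ finite_octV]) (auto simp: E4_targets_def)
  have pmf_target: "pmf (choice_pmf n u) a \<le> 1 / (4 * ?S)" if "a \<in> ?A" for a
  proof -
    have a: "a \<in> octV n - {u}" "2 \<le> octDist n u a"
      using that by (auto simp: E4_targets_def)
    have "(2::real)\<^sup>2 \<le> (real (octDist n u a))\<^sup>2"
      using a(2) by (intro power_mono) auto
    then have "?S * 4 \<le> ?S * (real (octDist n u a))\<^sup>2"
      using S_pos by (intro mult_left_mono) auto
    then have "1 / (?S * (real (octDist n u a))\<^sup>2) \<le> 1 / (?S * 4)"
      using S_pos a(2) by (intro divide_left_mono mult_pos_pos) auto
    moreover have "pmf (choice_pmf n u) a = 1 / (?S * (real (octDist n u a))\<^sup>2)"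
      using pmf_choice_pmf[OF S_pos, of a] a(1) by (simp add: octZ_eq inverse_eq_divide)
    ultimately show ?thesis
      by (simp add: mult.commute)
  qed
  have "measure_pmf.prob (OSW_pmf n) (E4 n u)
          \<le> measure_pmf.prob (OSW_pmf n) ((\<lambda>c. c u) -` ?A)"
    by (rule measure_pmf.finite_measure_mono[OF E4_subset_E4_targets]) simp
  also have "\<dots> = measure_pmf.prob (choice_pmf n u) ?A"
    by (simp flip: map_pmf_OSW_pmf_component[OF assms(1)])
  also have "\<dots> = (\<Sum>a \<in> ?A. pmf (choice_pmf n u) a)"
    by (rule measure_measure_pmf_finite[OF finite_A])
  also have "\<dots> \<le> (\<Sum>a \<in> ?A. 1 / (4 * ?S))"
    by (rule sum_mono) (rule pmf_target)
  finally show ?thesis by simp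
qed

lemma prob_E4_less:
  assumes "u \<in> octV n" and "0 < L" and S: "2 * L < inv_sq_dist_sum n u"
    and card: "card (E4_targets n u) \<le> 24"
  shows "measure_pmf.prob (OSW_pmf n) (E4 n u) < 3 / L"
proof -
  have S_pos: "0 < inv_sq_dist_sum n u"
    using S assms(2) by linarith
  have "measure_pmf.prob (OSW_pmf n) (E4 n u) \<le> card (E4_targets n u) / (4 * inv_sq_dist_sum n u)"
    by (rule prob_E4_le[OF assms(1) S_pos])
  also have "\<dots> \<le> 24 / (4 * inv_sq_dist_sum n u)"
    using card S_pos by (intro divide_right_mono) simp_all
  also have "\<dots> = 6 / inv_sq_dist_sum n u"
    by simp
  also have "\<dots> < 6 / (2 * L)"
    using S by (intro divide_strict_left_mono mult_pos_pos S_pos assms(2)) auto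
  also have "\<dots> = 3 / L"
    by simp
  finally show ?thesis .
qed

definition rotate_quarter :: "nat \<Rightarrow> int \<times> int \<Rightarrow> int \<times> int" where
  "rotate_quarter r x = (if r = 0 then x else if r = 1 then (- snd x, fst x)
     else if r = 2 then (- fst x, - snd x) else (snd x, - fst x))"

text \<open>The index \<open>(r, k, j)\<close> runs over the \<open>4 k\<close> lattice points of \<open>\<ell>\<^sub>1\<close>-norm \<open>k\<close>.\<close>

definition sphere_index :: "nat \<Rightarrow> (nat \<times> nat \<times> nat) set" where
  "sphere_index K = {0..<4} \<times> Sigma {1..K} (\<lambda>k. {..<k})"

definition sphere_point :: "nat \<times> nat \<times> nat \<Rightarrow> int \<times> int" where
  "sphere_point i =
     rotate_quarter (fst i) (int (fst (snd i)) - int (snd (snd i)), int (snd (snd i)))"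

lemma l1_norm_sphere_point:
  "i \<in> sphere_index K \<Longrightarrow> \<bar>fst (sphere_point i)\<bar> + \<bar>snd (sphere_point i)\<bar> = int (fst (snd i))"
  by (auto simp: sphere_index_def sphere_point_def rotate_quarter_def)

lemma inj_on_sphere_point: "inj_on sphere_point (sphere_index K)"
  by (auto simp: inj_on_def sphere_index_def sphere_point_def rotate_quarter_def split: if_splits)

lemma sum_sphere_index_inv_sq:
  "(\<Sum>i \<in> sphere_index K. 1 / (real (fst (snd i)))\<^sup>2) = 4 * harm K"
proof -
  have "(\<Sum>i \<in> sphere_index K. 1 / (real (fst (snd i)))\<^sup>2)
      = (\<Sum>r \<in> {0..<4::nat}. \<Sum>(k, j) \<in> Sigma {1..K} (\<lambda>k. {..<k}). 1 / (real k)\<^sup>2)"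
    unfolding sphere_index_def sum.cartesian_product by (simp add: case_prod_unfold)
  also have "\<dots> = 4 * (\<Sum>(k, j) \<in> Sigma {1..K} (\<lambda>k. {..<k}). 1 / (real k)\<^sup>2)"
    by simp
  also have "\<dots> = 4 * (\<Sum>k = 1..K. \<Sum>j<k. 1 / (real k)\<^sup>2)"
    by (subst sum.Sigma) auto
  also have "\<dots> = 4 * (\<Sum>k = 1..K. inverse (real k))"
    by (intro arg_cong[where f = "(*) 4"] sum.cong) (auto simp: power2_eq_square field_simps)
  finally show ?thesis by (simp add: harm_def)
qed

definition oct_symmetry :: "(pt \<Rightarrow> pt) \<Rightarrow> bool" where
  "oct_symmetry \<sigma> \<longleftrightarrow> bij \<sigma> \<and> (\<forall>x. l1_norm (\<sigma> x) = l1_norm x) \<and>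
     (\<forall>x y. cheb_dist (\<sigma> x) (\<sigma> y) = cheb_dist x y)"

lemma oct_symmetry_id: "oct_symmetry id"
  by (simp add: oct_symmetry_def)

lemma oct_symmetry_comp: "oct_symmetry \<sigma> \<Longrightarrow> oct_symmetry \<tau> \<Longrightarrow> oct_symmetry (\<sigma> \<circ> \<tau>)"
  by (simp add: oct_symmetry_def bij_comp del: split_paired_All)

lemma oct_symmetry_negate_third: "oct_symmetry (\<lambda>(a, b, c). (a, b, - c))"
  unfolding oct_symmetry_def
  by (auto simp: l1_norm_def cheb_dist_def abs_minus_commute
      intro!: o_bij[where g = "\<lambda>(a, b, c). (a, b, - c)"])

lemma oct_symmetry_cycle: "oct_symmetry (\<lambda>(a, b, c). (c, a, b))"
  unfolding oct_symmetry_def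
  by (auto simp: l1_norm_def cheb_dist_def max.assoc max.commute max.left_commute
      intro!: o_bij[where g = "\<lambda>(a, b, c). (b, c, a)"])

lemma oct_symmetry_swap: "oct_symmetry (\<lambda>(a, b, c). (a, c, b))"
  unfolding oct_symmetry_def
  by (auto simp: l1_norm_def cheb_dist_def max.commute max.left_commute
      intro!: o_bij[where g = "\<lambda>(a, b, c). (a, c, b)"])

lemma ln_less_three:
  assumes "n < 7"
  shows "ln (real n + 1) < 3"
proof -
  have "(2::real) ^ 3 \<le> exp 1 ^ 3"
    using exp_ge_add_one_self[of 1] by (intro power_mono) auto
  also have "exp 1 ^ 3 = exp (3::real)"
    using exp_of_nat_mult[of 3 "1::real"] by simp
  finally have "real n + 1 < exp 3"
    using assms by simp
  then have "ln (real n + 1) < ln (exp 3)"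
    by (subst ln_less_cancel_iff) auto
  then show ?thesis by simp
qed

lemma ln_less_two_harm:
  assumes "n \<le> 3 * K" and "2 \<le> K"
  shows "ln (real n + 1) < 2 * harm K"
proof -
  have "real n \<le> 3 * real K"
    using assms(1) by (metis of_nat_le_iff of_nat_mult of_nat_numeral)
  moreover have "2 * real K \<le> real K * real K"
    using assms(2) by (intro mult_right_mono) auto
  moreover have "(real K + 1)\<^sup>2 = real K * real K + 2 * real K + 1"
    by (simp add: power2_eq_square algebra_simps)
  ultimately have "real n + 1 < (real K + 1)\<^sup>2"
    using assms(2) by linarith
  then have "ln (real n + 1) < ln ((real K + 1)\<^sup>2)"
    by (subst ln_less_cancel_iff) auto
  also have "\<dots> = 2 * ln (real K + 1)"
    by (simp add: ln_realpow)
  also have "\<dots> \<le> 2 * harm K"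
    using ln_le_harm[of K] by simp
  finally show ?thesis .
qed

lemma abs_height_diff_le:
  fixes N p q a b a' b' :: int
  shows "\<bar>(N - \<bar>p + a'\<bar> - \<bar>q + b'\<bar>) - (N - \<bar>p + a\<bar> - \<bar>q + b\<bar>)\<bar> \<le> \<bar>a - a'\<bar> + \<bar>b - b'\<bar>"
  by arith

text \<open>A symmetry \<open>\<sigma>\<close> together with a vertex \<open>(p, q, t)\<close> of the face \<open>x\<^sub>3 \<ge> 0\<close>: the chart lifts
  lattice points \<open>(a, b)\<close> with \<open>\<bar>a\<bar> + \<bar>b\<bar> \<le> t\<close> to that face, and lattice neighbours to
  neighbours in \<open>G'\<^sub>n\<close>.\<close>

locale octahedron_chart =
  fixes n :: nat and \<sigma> :: "pt \<Rightarrow> pt" and p q t :: int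
  assumes symmetry: "oct_symmetry \<sigma>"
    and centre_in_octV: "\<bar>p\<bar> + \<bar>q\<bar> + t = int n"
    and height_nonneg: "0 \<le> t"
begin

lemma symmetry_eq_iff [simp]: "\<sigma> x = \<sigma> y \<longleftrightarrow> x = y"
  using symmetry by (auto simp: oct_symmetry_def bij_def dest: injD)

lemma l1_norm_symmetry [simp]: "l1_norm (\<sigma> x) = l1_norm x"
  using symmetry by (simp add: oct_symmetry_def del: split_paired_All)

lemma cheb_dist_symmetry [simp]: "cheb_dist (\<sigma> x) (\<sigma> y) = cheb_dist x y"
  using symmetry by (simp add: oct_symmetry_def del: split_paired_All)

lemma symmetry_surj: "\<exists>y. x = \<sigma> y"
  using symmetry unfolding oct_symmetry_def bij_def surj_def by blast

definition chart :: "int \<times> int \<Rightarrow> pt" where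
  "chart = (\<lambda>(a, b). \<sigma> (p + a, q + b, int n - \<bar>p + a\<bar> - \<bar>q + b\<bar>))"

lemma chart_origin: "chart (0, 0) = \<sigma> (p, q, t)"
proof -
  have "int n - \<bar>p\<bar> - \<bar>q\<bar> = t"
    using centre_in_octV by linarith
  then show ?thesis by (simp add: chart_def)
qed

lemma chart_in_octV:
  assumes "\<bar>a\<bar> + \<bar>b\<bar> \<le> t"
  shows "chart (a, b) \<in> octV n"
proof -
  have "l1_norm (p + a, q + b, int n - \<bar>p + a\<bar> - \<bar>q + b\<bar>) = int n"
    unfolding l1_norm_def fst_conv snd_conv using assms centre_in_octV by arith
  then show ?thesis by (simp add: chart_def octV_iff_l1_norm)
qed

lemma inj_chart: "inj chart"
  by (auto simp: inj_def chart_def)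

lemma chart_adjacent:
  assumes "\<bar>a\<bar> + \<bar>b\<bar> \<le> t" "\<bar>a'\<bar> + \<bar>b'\<bar> \<le> t" and step: "\<bar>a - a'\<bar> + \<bar>b - b'\<bar> = 1"
  shows "octAdj n (chart (a', b')) (chart (a, b))"
proof -
  have "chart (a', b') \<noteq> chart (a, b)"
    using step injD[OF inj_chart, of "(a', b')" "(a, b)"] by auto
  moreover have "cheb_dist (chart (a', b')) (chart (a, b)) \<le> 1"
  proof -
    have "\<bar>p + a' - (p + a)\<bar> \<le> 1" and "\<bar>q + b' - (q + b)\<bar> \<le> 1"
      using step by arith+
    moreover have "\<bar>(int n - \<bar>p + a'\<bar> - \<bar>q + b'\<bar>) - (int n - \<bar>p + a\<bar> - \<bar>q + b\<bar>)\<bar> \<le> 1"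
      using abs_height_diff_le[of "int n" p a' q b' a b] step by linarith
    ultimately have "cheb_dist (p + a', q + b', int n - \<bar>p + a'\<bar> - \<bar>q + b'\<bar>)
        (p + a, q + b, int n - \<bar>p + a\<bar> - \<bar>q + b\<bar>) \<le> 1"
      unfolding cheb_dist_def fst_conv snd_conv by (intro max.boundedI)
    then show ?thesis by (simp add: chart_def)
  qed
  ultimately show ?thesis
    using assms chart_in_octV by (simp add: octAdj_iff_cheb_dist)
qed

lemma chart_path:
  "\<bar>a\<bar> + \<bar>b\<bar> = int k \<Longrightarrow> int k \<le> t \<Longrightarrow> (\<sigma> (p, q, t), chart (a, b)) \<in> octE n ^^ k"
proof (induction k arbitrary: a b)
  case 0
  then have "a = 0" "b = 0" by auto
  then show ?case by (simp add: chart_origin)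
next
  case (Suc k)
  define a' where "a' = (if a > 0 then a - 1 else if a < 0 then a + 1 else a)"
  define b' where "b' = (if a \<noteq> 0 then b else if b > 0 then b - 1 else b + 1)"
  have norm': "\<bar>a'\<bar> + \<bar>b'\<bar> = int k" and step: "\<bar>a - a'\<bar> + \<bar>b - b'\<bar> = 1"
    using Suc.prems(1) by (auto simp: a'_def b'_def)
  have "(\<sigma> (p, q, t), chart (a', b')) \<in> octE n ^^ k"
    using Suc.IH[OF norm'] Suc.prems(2) by simp
  moreover have "(chart (a', b'), chart (a, b)) \<in> octE n"
    using chart_adjacent[OF _ _ step] Suc.prems norm' by (simp add: octE_def)
  ultimately show ?case by auto
qed

lemma chart_eq_centre_iff: "chart (a, b) = \<sigma> (p, q, t) \<longleftrightarrow> a = 0 \<and> b = 0"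
  using inj_chart by (auto simp: inj_eq simp flip: chart_origin)

lemma octDist_centre_chart:
  assumes "\<bar>a\<bar> + \<bar>b\<bar> = int k" and "0 < k" and "int k \<le> t"
  shows "0 < octDist n (\<sigma> (p, q, t)) (chart (a, b))"
    and "octDist n (\<sigma> (p, q, t)) (chart (a, b)) \<le> k"
proof -
  have path: "(\<sigma> (p, q, t), chart (a, b)) \<in> octE n ^^ k"
    using chart_path assms(1,3) .
  have "chart (a, b) \<noteq> \<sigma> (p, q, t)"
    using assms(1,2) by (auto simp: chart_eq_centre_iff)
  then show "0 < octDist n (\<sigma> (p, q, t)) (chart (a, b))"
    using octDist_pos[OF path] by auto
  show "octDist n (\<sigma> (p, q, t)) (chart (a, b)) \<le> k"
    by (rule octDist_le[OF path])
qed

lemma four_harm_le_inv_sq_dist_sum: "4 * harm (nat t) \<le> inv_sq_dist_sum n (\<sigma> (p, q, t))"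
proof -
  define u where "u = \<sigma> (p, q, t)"
  define w where "w i = chart (sphere_point i)" for i
  have w: "w i \<in> octV n - {u} \<and> 0 < octDist n u (w i) \<and> octDist n u (w i) \<le> fst (snd i)"
    if i: "i \<in> sphere_index (nat t)" for i
  proof -
    obtain a b where ab: "sphere_point i = (a, b)" by fastforce
    have norm: "\<bar>a\<bar> + \<bar>b\<bar> = int (fst (snd i))"
      using l1_norm_sphere_point[OF i] ab by simp
    have k: "0 < fst (snd i)" "int (fst (snd i)) \<le> t"
      using i height_nonneg by (auto simp: sphere_index_def)
    show ?thesis
      using chart_in_octV[of a b] chart_eq_centre_iff[of a b] octDist_centre_chart[OF norm k] norm k
      by (auto simp: w_def u_def ab)
  qed
  have inj_w: "inj_on w (sphere_index (nat t))"
    using inj_on_sphere_point[of "nat t"] inj_chart unfolding w_def inj_on_def inj_def by blast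
  have "4 * harm (nat t) = (\<Sum>i \<in> sphere_index (nat t). 1 / (real (fst (snd i)))\<^sup>2)"
    by (simp add: sum_sphere_index_inv_sq)
  also have "\<dots> \<le> (\<Sum>i \<in> sphere_index (nat t). 1 / (real (octDist n u (w i)))\<^sup>2)"
  proof (rule sum_mono)
    fix i assume "i \<in> sphere_index (nat t)"
    then have "0 < octDist n u (w i)" "octDist n u (w i) \<le> fst (snd i)"
      using w by auto
    then show "1 / (real (fst (snd i)))\<^sup>2 \<le> 1 / (real (octDist n u (w i)))\<^sup>2"
      by (intro divide_left_mono power_mono mult_pos_pos) auto
  qed
  also have "\<dots> = (\<Sum>v \<in> w ` sphere_index (nat t). 1 / (real (octDist n u v))\<^sup>2)"
    by (simp add: sum.reindex[OF inj_w])
  also have "\<dots> \<le> inv_sq_dist_sum n u"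
    unfolding inv_sq_dist_sum_def
  proof (rule sum_mono2)
    show "w ` sphere_index (nat t) \<subseteq> octV n - {u}"
      using w by blast
  qed (simp_all add: finite_octV)
  finally show ?thesis by (simp add: u_def)
qed

lemma two_ln_less_inv_sq_dist_sum:
  assumes "int n \<le> 3 * t" and "2 \<le> t"
  shows "2 * ln (real n + 1) < inv_sq_dist_sum n (\<sigma> (p, q, t))"
proof -
  have "2 * ln (real n + 1) < 4 * harm (nat t)"
    using ln_less_two_harm[of n "nat t"] assms by simp
  then show ?thesis
    using four_harm_le_inv_sq_dist_sum by simp
qed

lemma near_centre_in_chart:
  assumes "3 \<le> t" and "x \<in> octV n" and "cheb_dist x (\<sigma> (p, q, t)) \<le> 2"
  shows "x \<in> chart ` ({-2..2} \<times> {-2..2})"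
proof -
  obtain y1 y2 y3 where x: "x = \<sigma> (y1, y2, y3)"
    using symmetry_surj by (metis prod.exhaust)
  have "cheb_dist (y1, y2, y3) (p, q, t) \<le> 2"
    using assms(3) by (simp add: x)
  then have close: "\<bar>y1 - p\<bar> \<le> 2" "\<bar>y2 - q\<bar> \<le> 2" "\<bar>y3 - t\<bar> \<le> 2"
    by (simp_all add: cheb_dist_def)
  have "l1_norm (y1, y2, y3) = int n"
    using assms(2) by (simp add: x octV_iff_l1_norm)
  then have "\<bar>y1\<bar> + \<bar>y2\<bar> + \<bar>y3\<bar> = int n"
    by (simp add: l1_norm_def)
  then have "x = chart (y1 - p, y2 - q)"
    using close(3) assms(1) by (simp add: x chart_def)
  then show ?thesis
    using close(1,2) by (auto simp: abs_le_iff)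
qed

lemma card_E4_targets_le:
  assumes "3 \<le> t"
  shows "card (E4_targets n (\<sigma> (p, q, t))) \<le> 24"
proof -
  define box where "box = ({-2..2} \<times> {-2..2} :: (int \<times> int) set) - {(0, 0)}"
  have "E4_targets n (\<sigma> (p, q, t)) \<subseteq> chart ` box"
  proof
    fix x assume x: "x \<in> E4_targets n (\<sigma> (p, q, t))"
    then obtain y where "octAdj n x y" "octAdj n y (\<sigma> (p, q, t))"
      by (auto simp: E4_targets_def)
    then have "cheb_dist x (\<sigma> (p, q, t)) \<le> 2"
      using cheb_dist_triangle[of x "\<sigma> (p, q, t)" y] by (simp add: octAdj_iff_cheb_dist)
    then have "x \<in> chart ` ({-2..2} \<times> {-2..2})"
      using near_centre_in_chart assms x by (simp add: E4_targets_def)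
    moreover have "x \<noteq> chart (0, 0)"
      using x by (simp add: E4_targets_def chart_origin)
    ultimately show "x \<in> chart ` box"
      unfolding box_def by blast
  qed
  then have "card (E4_targets n (\<sigma> (p, q, t))) \<le> card (chart ` box)"
    by (rule card_mono[rotated]) (simp add: box_def)
  also have "\<dots> \<le> card box"
    by (rule card_image_le) (simp add: box_def)
  also have "card box = 24"
    by (simp add: box_def card_cartesian_product)
  finally show ?thesis .
qed

end


lemma octahedron_chart_exists:
  assumes "u \<in> octV n"
  obtains \<sigma> p q t where "octahedron_chart n \<sigma> p q t" "u = \<sigma> (p, q, t)" "int n \<le> 3 * t"
proof -
  note result = that
  have witness: thesis
    if "oct_symmetry \<sigma>" "u = \<sigma> (p, q, t)" "\<bar>p\<bar> + \<bar>q\<bar> + t = int n" "int n \<le> 3 * t"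
    for \<sigma> p q t
    using result[of \<sigma> p q t] that by (auto simp: octahedron_chart_def)
  obtain x y z where u: "u = (x, y, z)" by (cases u)
  have norm: "\<bar>x\<bar> + \<bar>y\<bar> + \<bar>z\<bar> = int n"
    using assms by (simp add: u octV_def)
  text \<open>Move a coordinate of largest absolute value to the third place, made nonnegative.\<close>
  consider "int n \<le> 3 * z" | "int n \<le> 3 * (- z)" | "int n \<le> 3 * x" | "int n \<le> 3 * (- x)"
    | "int n \<le> 3 * y" | "int n \<le> 3 * (- y)"
    using norm by arith
  then show thesis
  proof cases
    case 1
    then show ?thesis
      using norm by (intro witness[of id x y z]) (auto simp: u oct_symmetry_id)
  next
    case 2
    then show ?thesis
      using norm by (intro witness[of "\<lambda>(a, b, c). (a, b, - c)" x y "- z"])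
        (auto simp: u oct_symmetry_negate_third)
  next
    case 3
    then show ?thesis
      using norm by (intro witness[of "\<lambda>(a, b, c). (c, a, b)" y z x])
        (auto simp: u oct_symmetry_cycle)
  next
    case 4
    then show ?thesis
      using norm oct_symmetry_comp[OF oct_symmetry_cycle oct_symmetry_negate_third]
      by (intro witness[of "(\<lambda>(a, b, c). (c, a, b)) \<circ> (\<lambda>(a, b, c). (a, b, - c))" y z "- x"])
        (auto simp: u)
  next
    case 5
    then show ?thesis
      using norm by (intro witness[of "\<lambda>(a, b, c). (a, c, b)" x z y])
        (auto simp: u oct_symmetry_swap)
  next
    case 6
    then show ?thesis
      using norm oct_symmetry_comp[OF oct_symmetry_swap oct_symmetry_negate_third]
      by (intro witness[of "(\<lambda>(a, b, c). (a, c, b)) \<circ> (\<lambda>(a, b, c). (a, b, - c))" x z "- y"])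
        (auto simp: u)
  qed
qed

theorem lemma8:
  fixes n :: nat and u :: pt
  assumes "n \<ge> 1" and "u \<in> octV n"
  shows "measure_pmf.prob (OSW_pmf n) (E4 n u) < 3 / ln (real n + 1)"
proof -
  have ln_pos: "0 < ln (real n + 1)"
    using assms(1) by simp
  show ?thesis
  proof (cases "n < 7")
    case True
    have "measure_pmf.prob (OSW_pmf n) (E4 n u) \<le> 1" by simp
    also have "1 < 3 / ln (real n + 1)"
      using ln_less_three[OF True] ln_pos by simp
    finally show ?thesis .
  next
    case False
    obtain \<sigma> p q t where chart: "octahedron_chart n \<sigma> p q t"
      and u: "u = \<sigma> (p, q, t)" and large: "int n \<le> 3 * t"
      using octahedron_chart_exists[OF assms(2)] .
    interpret octahedron_chart n \<sigma> p q t by (fact chart)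
    have "3 \<le> t"
      using large False by linarith
    then show ?thesis
      using prob_E4_less[OF assms(2) ln_pos] two_ln_less_inv_sq_dist_sum[OF large]
        card_E4_targets_le
      by (simp add: u)
  qed
qed

end
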